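(* Let $M$ be a magma satisfying $xy = xz$ and $(xy)z = xy$ for all $x,y,z\in M$. Then $M$ satisfies $xy = zu$ for all $x,y,z,u\in M$ if and only if $M$ avoids the magma $2_{LZ}$ on $\{0,1\}$ with Cayley table \[ \begin{array}{c|cc} 2_{LZ} & 0 & 1 \\ \hline 0 & 0 & 0 \\ 1 & 1 & 1 \end{array}. \]
   Context: A magma is a nonempty set with a binary operation, written by juxtaposition. A magma $M$ avoids a magma $F$ if no submagma of $M$ is isomorphic to $F$. *)

theory Defs
  imports Main
begin

definition is_submagma :: "'a set \<Rightarrow> 'a set \<Rightarrow> ('a \<Rightarrow> 'a \<Rightarrow> 'a) \<Rightarrow> bool" where
  "is_submagma S M m \<longleftrightarrow> S \<subseteq> M \<and> S \<noteq> {} \<and> (\<forall>x\<in>S. \<forall>y\<in>S. m x y \<in> S)"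

definition magma_iso :: "'b set \<Rightarrow> ('b \<Rightarrow> 'b \<Rightarrow> 'b) \<Rightarrow> 'a set \<Rightarrow> ('a \<Rightarrow> 'a \<Rightarrow> 'a) \<Rightarrow> bool" where
  "magma_iso F f S m \<longleftrightarrow>
     (\<exists>h. bij_betw h F S \<and> (\<forall>x\<in>F. \<forall>y\<in>F. h (f x y) = m (h x) (h y)))"

definition avoids :: "'a set \<Rightarrow> ('a \<Rightarrow> 'a \<Rightarrow> 'a) \<Rightarrow> 'b set \<Rightarrow> ('b \<Rightarrow> 'b \<Rightarrow> 'b) \<Rightarrow> bool" where
  "avoids M m F f \<longleftrightarrow> \<not> (\<exists>S. is_submagma S M m \<and> magma_iso F f S m)"

definition LZ2_carrier :: "nat set" where "LZ2_carrier = {0, 1}"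
definition LZ2_op :: "nat \<Rightarrow> nat \<Rightarrow> nat" where "LZ2_op x y = x"

end

theory Submission
  imports Defs
begin

text \<open>Both elements of \<open>2\<^sub>L\<^sub>Z\<close> are idempotent, so a copy of it consists of two distinct
  idempotents; in a magma with constant product there is at most one idempotent.
  Conversely, by \<open>(xy)z = xy\<close> every product is a left zero, and two distinct left zeros
  span a copy of \<open>2\<^sub>L\<^sub>Z\<close>.\<close>

lemma LZ2_iso_idempotents:
  assumes "magma_iso LZ2_carrier LZ2_op S m"
  obtains a b where "a \<noteq> b" "m a a = a" "m b b = b"
proof -
  from assms obtain h where bij: "bij_betw h LZ2_carrier S"
    and hom: "\<forall>x\<in>LZ2_carrier. \<forall>y\<in>LZ2_carrier. h (LZ2_op x y) = m (h x) (h y)"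
    unfolding magma_iso_def by blast
  have "h 0 \<noteq> h 1"
    using bij_betw_imp_inj_on[OF bij] by (auto simp: LZ2_carrier_def inj_on_def)
  moreover have "m (h 0) (h 0) = h 0" "m (h 1) (h 1) = h 1"
    using hom by (auto simp: LZ2_carrier_def LZ2_op_def)
  ultimately show thesis by (rule that)
qed

lemma avoids_LZ2_if_idempotent_unique:
  assumes "\<And>a b. m a a = a \<Longrightarrow> m b b = b \<Longrightarrow> a = b"
  shows "avoids M m LZ2_carrier LZ2_op"
  unfolding avoids_def using assms LZ2_iso_idempotents by metis

lemma left_zeros_iso_LZ2:
  assumes "a \<noteq> b" "\<And>w. m a w = a" "\<And>w. m b w = b"
  shows "magma_iso LZ2_carrier LZ2_op {a, b} m"
proof -
  define h where "h = (\<lambda>n::nat. if n = 0 then a else b)"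
  have "bij_betw h LZ2_carrier {a, b}"
    using assms(1) by (auto simp: bij_betw_def inj_on_def h_def LZ2_carrier_def)
  moreover have "\<forall>x\<in>LZ2_carrier. \<forall>y\<in>LZ2_carrier. h (LZ2_op x y) = m (h x) (h y)"
    using assms(2,3) by (auto simp: LZ2_carrier_def LZ2_op_def h_def)
  ultimately show ?thesis
    unfolding magma_iso_def by blast
qed

lemma not_avoids_LZ2_if_left_zeros:
  assumes "a \<in> M" "b \<in> M" "a \<noteq> b" "\<And>w. m a w = a" "\<And>w. m b w = b"
  shows "\<not> avoids M m LZ2_carrier LZ2_op"
proof -
  have "is_submagma {a, b} M m"
    using assms by (auto simp: is_submagma_def)
  moreover have "magma_iso LZ2_carrier LZ2_op {a, b} m"
    using assms(3-5) by (rule left_zeros_iso_LZ2)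
  ultimately show ?thesis
    unfolding avoids_def by blast
qed

theorem mainTheorem3:
  fixes m :: "'a \<Rightarrow> 'a \<Rightarrow> 'a"
  assumes "\<forall>x y z. m x y = m x z"
    and "\<forall>x y z. m (m x y) z = m x y"
  shows "(\<forall>x y z u. m x y = m z u) \<longleftrightarrow> avoids UNIV m LZ2_carrier LZ2_op"
proof
  assume "\<forall>x y z u. m x y = m z u"
  then show "avoids UNIV m LZ2_carrier LZ2_op"
    by (metis avoids_LZ2_if_idempotent_unique)
next
  assume avoids: "avoids UNIV m LZ2_carrier LZ2_op"
  show "\<forall>x y z u. m x y = m z u"
  proof (intro allI)
    fix x y z u
    have "\<And>w. m (m x y) w = m x y" "\<And>w. m (m z u) w = m z u"
      using assms(2) by simp_all
    with avoids show "m x y = m z u"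
      using not_avoids_LZ2_if_left_zeros[of "m x y" UNIV "m z u" m] by blast
  qed
qed

end
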